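(* For even $n\to\infty$, $$\sum_{w\in\mathcal{W}_n}\nu(w)\,V(w)\sim\frac{\sqrt{2\pi}}{8}\,n\sqrt{n}.$$
   Context: A configuration of length $n$ is a word $w=w_1\cdots w_n$ over $\{1,2\}$ with $|w|_1=|w|_2$; $\mathcal{W}_n$ is the set of such words. A flip at position $i$ exchanges $w_i$ and $w_{i+1}$ when $w_i\ne w_{i+1}$; let $F(w)$ be the number of positions $i$ at which a flip can be performed, i.e. the number of $i\in\{1,\dots,n-1\}$ with $w_i\ne w_{i+1}$. The natural distribution $\nu$ on $\mathcal{W}_n$ is the stationary distribution of the random walk that at each step performs a uniformly random flip among all possible flips; it is given by $\nu(w)=F(w)/\sum_{w'\in\mathcal{W}_n}F(w')$. The configuration $w$ is represented by the broken line through the points $(k,\,|w_1\cdots w_k|_1-|w_1\cdots w_k|_2)$, $k=0,\dots,n$; the volume $V(w)$ is the area between this broken line and the horizontal axis. *)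

theory Defs
  imports "HOL-Analysis.Analysis" "HOL-Library.Landau_Symbols"
begin

text \<open>Configurations: words over {1,2} (as lists of naturals) with equally many 1s and 2s.
  Positions are 0-indexed in Isabelle lists: w ! i is the paper's w_(i+1).\<close>

definition occ :: "nat \<Rightarrow> nat list \<Rightarrow> nat" where
  "occ a w = length (filter (\<lambda>x. x = a) w)"

definition configs :: "nat \<Rightarrow> nat list set" where
  "configs n = {w. length w = n \<and> set w \<subseteq> {1, 2} \<and> occ 1 w = occ 2 w}"

definition flips :: "nat list \<Rightarrow> nat" where
  "flips w = card {i. i + 1 < length w \<and> w ! i \<noteq> w ! (i + 1)}"

definition nu :: "nat \<Rightarrow> nat list \<Rightarrow> real" where
  "nu n w = real (flips w) / (\<Sum>w'\<in>configs n. real (flips w'))"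

definition height :: "nat list \<Rightarrow> nat \<Rightarrow> real" where
  "height w k = real (occ 1 (take k w)) - real (occ 2 (take k w))"

definition broken_line :: "nat list \<Rightarrow> real \<Rightarrow> real" where
  "broken_line w x = (let k = nat \<lfloor>x\<rfloor> in
      height w k + (x - real k) * (height w (Suc k) - height w k))"

definition volume :: "nat list \<Rightarrow> real" where
  "volume w = integral {0..real (length w)} (\<lambda>x. \<bar>broken_line w x\<bar>)"

definition mean_volume :: "nat \<Rightarrow> real" where
  "mean_volume n = (\<Sum>w\<in>configs n. nu n w * volume w)"

end

theory Submission
  imports Defs "HOL-Real_Asymp.Real_Asymp"
begin

text \<open>A configuration is a lattice path with steps \<open>\<plusminus>1\<close>, and its volume is the trapezoidal sum of
  the absolute heights \<open>|h\<^sub>k|\<close>, because consecutive heights differ by one. The flip positions of a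
  configuration of length \<open>n + 2\<close> are the occurrences of \<open>12\<close> and \<open>21\<close>; deleting one leaves a
  configuration of length \<open>n\<close>, and conversely each of the \<open>2(n + 1)\<close> insertions of such a pair into a
  configuration of length \<open>n\<close> creates one. Hence \<open>\<Sum> F = 2(n + 1)|W\<^sub>n|\<close>, and \<open>\<Sum> F V\<close> is a combination
  of the total area \<open>A\<^sub>n = \<Sum>\<^sub>u \<Sum>\<^sub>k |h\<^sub>k(u)|\<close> and the number \<open>R\<^sub>n\<close> of returns to the axis.

  Counting paths through height \<open>h\<close> at time \<open>k\<close> by products of walk numbers, the ballot-type identity
  \<open>h N(c + 1, h) = (c + 1)(N(c, h - 1) - N(c, h + 1))\<close> makes the area sums telescope, and both \<open>A\<^sub>2\<^sub>m\<close>
  and \<open>R\<^sub>2\<^sub>m\<close> become Vandermonde convolutions of central binomial coefficients: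
  \<open>2A\<^sub>2\<^sub>m = m 4\<^sup>m\<close> and \<open>R\<^sub>2\<^sub>m = 4\<^sup>m\<close>. The mean volume at length \<open>2m + 2\<close> is thus
  \<open>4\<^sup>m (2m\<^sup>2 + 3m + 2) / (2(2m + 1) binom(2m, m))\<close>, and Wallis' product gives
  \<open>binom(2m, m) \<sim> 4\<^sup>m / \<surd>(\<pi> m)\<close>.\<close>

section \<open>Balance of a word and walk counts\<close>

definition balance :: "nat list \<Rightarrow> int" where
  "balance w = int (occ 1 w) - int (occ 2 w)"

lemma occ_append: "occ a (xs @ ys) = occ a xs + occ a ys"
  by (simp add: occ_def)

lemma balance_Nil [simp]: "balance [] = 0"
  by (simp add: balance_def occ_def)

lemma balance_append [simp]: "balance (xs @ ys) = balance xs + balance ys"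
  by (simp add: balance_def occ_append)

lemma balance_Cons_1 [simp]: "balance (Suc 0 # xs) = balance xs + 1"
  by (simp add: balance_def occ_def)

lemma balance_Cons_2 [simp]: "balance (2 # xs) = balance xs - 1"
  by (simp add: balance_def occ_def)

lemma height_eq_balance: "height w k = of_int (balance (take k w))"
  by (simp add: height_def balance_def)

lemma abs_balance_take_Suc_diff: "\<bar>balance (take (Suc k) w) - balance (take k w)\<bar> \<le> 1"
  by (cases "k < length w") (auto simp: take_Suc_conv_app_nth balance_def occ_def)

definition words :: "nat \<Rightarrow> nat list set" where
  "words n = {w. length w = n \<and> set w \<subseteq> {1, 2}}"

lemma finite_words [simp]: "finite (words n)"
  using finite_lists_length_eq[of "{1::nat, 2}" n] by (simp add: words_def conj_commute)

lemma words_Suc: "words (Suc n) = Cons 1 ` words n \<union> Cons 2 ` words n"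
  by (auto simp: words_def length_Suc_conv)

lemma words_0 [simp]: "words 0 = {[]}"
  by (auto simp: words_def)

lemma sum_words_Suc: "(\<Sum>w\<in>words (Suc n). f w) = (\<Sum>w\<in>words n. f (1 # w) + f (2 # w))"
  unfolding words_Suc sum.distrib
  by (subst sum.union_disjoint) (auto simp: sum.reindex inj_on_def)

lemma sum_words_add:
  "(\<Sum>w\<in>words (a + b). F (take a w) (drop a w)) = (\<Sum>x\<in>words a. \<Sum>y\<in>words b. F x y)"
proof -
  have "(\<Sum>w\<in>words (a + b). F (take a w) (drop a w)) = (\<Sum>(x, y)\<in>words a \<times> words b. F x y)"
    by (rule sum.reindex_bij_witness[where i="\<lambda>(x, y). x @ y" and j="\<lambda>w. (take a w, drop a w)"])
       (auto simp: words_def dest: in_set_takeD in_set_dropD)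
  then show ?thesis
    by (simp add: sum.cartesian_product)
qed

lemma configs_eq_words: "configs n = {w \<in> words n. balance w = 0}"
  by (auto simp: configs_def words_def balance_def)

lemma finite_configs [simp]: "finite (configs n)"
  by (simp add: configs_eq_words)

fun walk_count :: "nat \<Rightarrow> int \<Rightarrow> int" where
  "walk_count 0 h = (if h = 0 then 1 else 0)"
| "walk_count (Suc a) h = walk_count a (h - 1) + walk_count a (h + 1)"

lemma walk_count_eq_0_if_less_abs: "int a < \<bar>h\<bar> \<Longrightarrow> walk_count a h = 0"
  by (induction a arbitrary: h) auto

lemma walk_count_eq_0_if_odd: "odd (int a + h) \<Longrightarrow> walk_count a h = 0"
proof (induction a arbitrary: h)
  case (Suc a)
  then have "odd (int a + (h - 1))" "odd (int a + (h + 1))"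
    by auto
  with Suc.IH show ?case
    by simp
qed auto

lemma walk_count_uminus [simp]: "walk_count a (- h) = walk_count a h"
proof (induction a arbitrary: h)
  case (Suc a)
  have "- h - 1 = - (h + 1)" "- h + 1 = - (h - 1)"
    by simp_all
  with Suc.IH[of "h + 1"] Suc.IH[of "h - 1"] show ?case
    by (simp only: walk_count.simps)
qed simp

lemma walk_count_binomial: "j \<le> a \<Longrightarrow> walk_count a (2 * int j - int a) = int (a choose j)"
proof (induction a arbitrary: j)
  case (Suc a)
  have step: "walk_count (Suc a) (2 * int j - int (Suc a))
      = walk_count a (2 * int j - int a - 2) + walk_count a (2 * int j - int a)"
    by (simp add: algebra_simps)
  show ?case
  proof (cases j)
    case 0
    with step Suc.IH[of 0] show ?thesis
      by (simp add: walk_count_eq_0_if_less_abs)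
  next
    case (Suc i)
    with Suc.prems have "i \<le> a" by simp
    with Suc.IH[of i] have left: "walk_count a (2 * int j - int a - 2) = int (a choose i)"
      by (simp add: \<open>j = Suc i\<close> algebra_simps)
    have right: "walk_count a (2 * int j - int a) = int (a choose j)"
    proof (cases "j \<le> a")
      case True
      then show ?thesis by (rule Suc.IH)
    next
      case False
      then show ?thesis
        by (simp add: walk_count_eq_0_if_less_abs)
    qed
    show ?thesis
      unfolding step left right by (simp add: \<open>j = Suc i\<close>)
  qed
qed simp

lemma sum_window_shift:
  fixes g :: "int \<Rightarrow> 'a::comm_monoid_add"
  assumes supp: "\<And>h. g h \<noteq> 0 \<Longrightarrow> \<bar>h\<bar> < K" and "\<bar>d\<bar> \<le> 1"
  shows "(\<Sum>h=-K..K. g (h + d)) = (\<Sum>h=-K..K. g h)"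
proof -
  have to_support: "(\<Sum>h\<in>S. g h) = (\<Sum>h=-K+1..K-1. g h)" if "{-K+1..K-1} \<subseteq> S" "finite S" for S
    using that supp by (intro sum.mono_neutral_right) force+
  have "(\<Sum>h=-K..K. g (h + d)) = (\<Sum>h=d-K..K+d. g h)"
    by (rule sum.reindex_bij_witness[where i="\<lambda>h. h - d" and j="\<lambda>h. h + d"]) auto
  also have "\<dots> = (\<Sum>h=-K+1..K-1. g h)"
    using \<open>\<bar>d\<bar> \<le> 1\<close> by (intro to_support) auto
  also have "\<dots> = (\<Sum>h=-K..K. g h)"
    by (intro to_support[symmetric]) auto
  finally show ?thesis .
qed

lemma sum_words_balance:
  fixes f :: "int \<Rightarrow> real"
  assumes "int a < K"
  shows "(\<Sum>x\<in>words a. f (balance x)) = (\<Sum>h=-K..K. of_int (walk_count a h) * f h)"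
  using assms
proof (induction a arbitrary: f)
  case 0
  have "(\<Sum>h=-K..K. of_int (walk_count 0 h) * f h) = (\<Sum>h=-K..K. if h = 0 then f h else 0)"
    by (rule sum.cong) auto
  with 0 show ?case
    by simp
next
  case (Suc a)
  have shift: "(\<Sum>h=-K..K. of_int (walk_count a h) * f (h + d))
      = (\<Sum>h=-K..K. of_int (walk_count a (h - d)) * f h)" if "\<bar>d\<bar> \<le> 1" for d
  proof -
    have "(\<Sum>h=-K..K. of_int (walk_count a (h + d - d)) * f (h + d))
        = (\<Sum>h=-K..K. of_int (walk_count a (h - d)) * f h)"
    proof (rule sum_window_shift[where g="\<lambda>h. of_int (walk_count a (h - d)) * f h"])
      fix h assume "of_int (walk_count a (h - d)) * f h \<noteq> 0"
      then have "\<bar>h - d\<bar> \<le> int a"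
        using walk_count_eq_0_if_less_abs[of a "h - d"] by force
      with Suc.prems that show "\<bar>h\<bar> < K"
        by simp
    qed (fact that)
    then show ?thesis
      by simp
  qed
  have "(\<Sum>x\<in>words (Suc a). f (balance x)) = (\<Sum>x\<in>words a. f (balance x + 1) + f (balance x - 1))"
    by (simp add: sum_words_Suc)
  also have "\<dots> = (\<Sum>h=-K..K. of_int (walk_count a h) * f (h + 1))
      + (\<Sum>h=-K..K. of_int (walk_count a h) * f (h + -1))"
    using Suc.IH[of "\<lambda>h. f (h + 1)"] Suc.IH[of "\<lambda>h. f (h + -1)"] Suc.prems
    by (simp add: sum.distrib)
  also have "\<dots> = (\<Sum>h=-K..K. of_int (walk_count (Suc a) h) * f h)"
    by (simp only: shift) (simp add: sum.distrib[symmetric] algebra_simps)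
  finally show ?case .
qed

lemma sum_window_indicator:
  assumes "int b < K"
  shows "(\<Sum>h=-K..K. of_int (walk_count b h) * (if h = c then 1 else 0) :: real) = of_int (walk_count b c)"
proof (cases "c \<in> {-K..K}")
  case False
  with assms have "walk_count b c = 0"
    by (intro walk_count_eq_0_if_less_abs) auto
  moreover have "(\<Sum>h=-K..K. of_int (walk_count b h) * (if h = c then 1 else 0) :: real) = 0"
    using False by (intro sum.neutral) auto
  ultimately show ?thesis
    by simp
next
  case True
  have "(\<Sum>h=-K..K. of_int (walk_count b h) * (if h = c then 1 else 0) :: real)
      = (\<Sum>h=-K..K. if h = c then of_int (walk_count b c) else 0)"
    by (rule sum.cong) auto
  with True show ?thesis
    by simp
qed

lemma sum_configs_prefix_balance:
  fixes f :: "int \<Rightarrow> real"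
  assumes "k \<le> n" "int n < K"
  shows "(\<Sum>u\<in>configs n. f (balance (take k u)))
       = (\<Sum>h=-K..K. of_int (walk_count k h * walk_count (n - k) h) * f h)"
proof -
  have "(\<Sum>u\<in>configs n. f (balance (take k u)))
      = (\<Sum>w\<in>words (k + (n - k)). if balance (take k w) + balance (drop k w) = 0
           then f (balance (take k w)) else 0)"
    unfolding configs_eq_words using assms(1) by (simp add: sum.inter_filter flip: balance_append)
  also have "\<dots> = (\<Sum>x\<in>words k. f (balance x) * (\<Sum>y\<in>words (n - k).
                     (\<lambda>h. if h = - balance x then 1 else 0) (balance y)))"
    by (subst sum_words_add) (auto simp: sum_distrib_left intro!: sum.cong)
  also have "\<dots> = (\<Sum>x\<in>words k. f (balance x) * of_int (walk_count (n - k) (balance x)))"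
  proof (intro sum.cong refl arg_cong2[where f="(*)"])
    fix x
    show "(\<Sum>y\<in>words (n - k). (\<lambda>h. if h = - balance x then 1 else 0) (balance y))
        = real_of_int (walk_count (n - k) (balance x))"
      using assms by (subst sum_words_balance[where K=K]) (auto simp: sum_window_indicator)
  qed
  also have "\<dots> = (\<Sum>h=-K..K. of_int (walk_count k h * walk_count (n - k) h) * f h)"
    using assms by (subst sum_words_balance[where K=K]) (auto simp: algebra_simps)
  finally show ?thesis .
qed

lemma walk_count_Suc_mult:
  "h * walk_count (Suc c) h = int (Suc c) * (walk_count c (h - 1) - walk_count c (h + 1))"
proof (induction c arbitrary: h)
  case 0
  show ?case
    by (cases "h = 1"; cases "h = -1") auto
next
  case (Suc c)
  have shifts: "h - 1 - 1 = h - 2" "h - 1 + 1 = h" "h + 1 - 1 = h" "h + 1 + 1 = h + 2"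
    by simp_all
  have left: "walk_count (Suc c) (h - 1) = walk_count c (h - 2) + walk_count c h"
    and right: "walk_count (Suc c) (h + 1) = walk_count c h + walk_count c (h + 2)"
    by (simp_all only: walk_count.simps shifts)
  have "(h - 1) * (walk_count c (h - 2) + walk_count c h)
      = (1 + int c) * (walk_count c (h - 2) - walk_count c h)"
    and "(h + 1) * (walk_count c h + walk_count c (h + 2))
      = (1 + int c) * (walk_count c h - walk_count c (h + 2))"
    using Suc.IH[of "h - 1"] Suc.IH[of "h + 1"] by (simp_all only: shifts left right of_nat_Suc)
  then have "h * walk_count (Suc (Suc c)) h = (int c + 2) * (walk_count c (h - 2) - walk_count c (h + 2))"
    by (simp only: walk_count.simps(2) shifts) algebra
  also have "\<dots> = int (Suc (Suc c)) * (walk_count (Suc c) (h - 1) - walk_count (Suc c) (h + 1))"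
    by (simp only: left right) simp
  finally show ?case .
qed

lemma sum_symmetric_abs:
  fixes f :: "int \<Rightarrow> int"
  assumes "\<And>h. f (- h) = f h"
  shows "(\<Sum>h=-K..K. \<bar>h\<bar> * f h) = 2 * (\<Sum>h=1..K. h * f h)"
proof -
  have "(\<Sum>h=-K..K. \<bar>h\<bar> * f h)
      = (\<Sum>h=-K..K. if 0 < h then h * f h else 0) + (\<Sum>h=-K..K. if h < 0 then - h * f h else 0)"
    by (subst sum.distrib[symmetric], rule sum.cong) auto
  also have "(\<Sum>h=-K..K. if h < 0 then - h * f h else 0) = (\<Sum>h=-K..K. if 0 < h then h * f h else 0)"
    by (rule sum.reindex_bij_witness[where i=uminus and j=uminus]) (auto simp: assms)
  also have "(\<Sum>h=-K..K. if 0 < h then h * f h else 0) = (\<Sum>h\<in>{h\<in>{-K..K}. 0 < h}. h * f h)"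
    by (rule sum.inter_filter[symmetric]) simp
  also have "{h\<in>{-K..K}. 0 < h} = {1..K}"
    by auto
  finally show ?thesis
    by simp
qed

lemma sum_telescope_two:
  fixes g :: "int \<Rightarrow> int"
  shows "(\<Sum>h=1..int m. g (h - 1) - g (h + 1)) = g 0 + g 1 - g (int m) - g (int m + 1)"
proof (induction m)
  case (Suc m)
  have "{1..int (Suc m)} = insert (int m + 1) {1..int m}"
    by auto
  with Suc.IH show ?case
    by (simp add: ac_simps)
qed simp

text \<open>Write \<open>a + b + 2 = (a + 1) + (b + 1)\<close> and expand one factor of the summand by
  \<open>walk_count_Suc_mult\<close> in each part; the two resulting sums add up to a telescoping sum.\<close>
lemma sum_abs_mult_walk_count_Suc:
  assumes "int (a + b + 2) < K"
  shows "int (Suc a + Suc b) * (\<Sum>h=-K..K. \<bar>h\<bar> * (walk_count (Suc a) h * walk_count (Suc b) h))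
       = 4 * int (Suc a) * int (Suc b)
           * (walk_count a 0 * walk_count b 0 + walk_count a 1 * walk_count b 1)"
proof -
  define P where "P = (\<Sum>h=1..K. h * (walk_count (Suc a) h * walk_count (Suc b) h))"
  define X where "X = (\<Sum>h=1..K. (walk_count a (h - 1) - walk_count a (h + 1)) * walk_count (Suc b) h)"
  define Y where "Y = (\<Sum>h=1..K. (walk_count b (h - 1) - walk_count b (h + 1)) * walk_count (Suc a) h)"
  have PX: "P = int (Suc a) * X"
    unfolding P_def X_def sum_distrib_left
    by (rule sum.cong) (simp_all only: mult.assoc[symmetric] walk_count_Suc_mult)
  have PY: "P = int (Suc b) * Y"
    unfolding P_def Y_def sum_distrib_left
    by (rule sum.cong) (metis mult.assoc mult.commute walk_count_Suc_mult)+
  have "X + Y = 2 * (\<Sum>h=1..K. walk_count a (h - 1) * walk_count b (h - 1)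
                              - walk_count a (h + 1) * walk_count b (h + 1))"
    unfolding X_def Y_def sum.distrib[symmetric] sum_distrib_left
    by (intro sum.cong) (simp_all add: algebra_simps)
  also have "\<dots> = 2 * (walk_count a 0 * walk_count b 0 + walk_count a 1 * walk_count b 1)"
    using assms sum_telescope_two[of "\<lambda>h. walk_count a h * walk_count b h" "nat K"]
    by (simp add: walk_count_eq_0_if_less_abs)
  finally have XY: "X + Y = 2 * (walk_count a 0 * walk_count b 0 + walk_count a 1 * walk_count b 1)" .
  have "int (Suc a + Suc b) * P = int (Suc a) * P + int (Suc b) * P"
    by (simp add: algebra_simps)
  also have "\<dots> = int (Suc a) * int (Suc b) * (X + Y)"
    by (subst (1) PY, subst PX) (simp add: algebra_simps)
  moreover have "(\<Sum>h=-K..K. \<bar>h\<bar> * (walk_count (Suc a) h * walk_count (Suc b) h)) = 2 * P"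
    unfolding P_def by (rule sum_symmetric_abs) simp
  ultimately show ?thesis
    unfolding XY by (simp add: algebra_simps)
qed

lemma sum_abs_mult_walk_count:
  assumes "k \<le> n" "int n < K"
  shows "int n * (\<Sum>h=-K..K. \<bar>h\<bar> * (walk_count k h * walk_count (n - k) h))
       = 4 * int k * int (n - k) * (walk_count (k - 1) 0 * walk_count (n - k - 1) 0
                                    + walk_count (k - 1) 1 * walk_count (n - k - 1) 1)"
proof (cases "k = 0 \<or> k = n")
  case True
  then show ?thesis
    by (auto intro!: sum.neutral)
next
  case False
  with assms(1) obtain a b where "k = Suc a" "n - k = Suc b"
    by (metis Suc_diff_Suc not0_implies_Suc le_neq_implies_less)
  moreover from this assms(1) have "n = Suc a + Suc b"
    by simp
  ultimately show ?thesis
    using assms(2) sum_abs_mult_walk_count_Suc[of a b K] by (simp del: walk_count.simps)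
qed

section \<open>Central binomial coefficients\<close>

definition central_binomial :: "nat \<Rightarrow> real" where
  "central_binomial j = real ((2 * j) choose j)"

lemma central_binomial_pos: "central_binomial j > 0"
  by (simp add: central_binomial_def)

lemma central_binomial_Suc:
  "real (Suc j) * central_binomial (Suc j) = 2 * (2 * real j + 1) * central_binomial j"
proof -
  have "Suc j * ((2 * Suc j) choose Suc j) = Suc (2 * j + 1) * ((2 * j + 1) choose Suc j)"
    using Suc_times_binomial[of j "2 * j + 1"] binomial_symmetric[of j "2 * j + 1"] by simp
  also have "\<dots> = 2 * (Suc j * (Suc (2 * j) choose Suc j))"
    by simp
  also have "\<dots> = 2 * (2 * j + 1) * ((2 * j) choose j)"
    by (simp only: Suc_times_binomial) simp
  finally have "real (Suc j * ((2 * Suc j) choose Suc j)) = real (2 * (2 * j + 1) * ((2 * j) choose j))"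
    by (simp only:)
  then show ?thesis
    unfolding central_binomial_def by (simp del: binomial_Suc_Suc add: algebra_simps)
qed

lemma walk_count_even_0: "of_int (walk_count (2 * j) 0) = central_binomial j"
  using walk_count_binomial[of j "2 * j"] by (simp add: central_binomial_def)

lemma walk_count_odd_1: "of_int (walk_count (Suc (2 * j)) 1) = central_binomial (Suc j) / 2"
proof -
  have "2 * walk_count (Suc (2 * j)) 1 = int ((2 * Suc j) choose Suc j)"
    using walk_count_binomial[of "Suc j" "Suc (2 * j)"] binomial_symmetric[of j "2 * j + 1"] by simp
  then show ?thesis
    unfolding central_binomial_def by linarith
qed

lemma gbinomial_by_recurrence:
  fixes f :: "nat \<Rightarrow> real"
  assumes "f 0 = 1" "\<And>j. real (Suc j) * f (Suc j) = - 4 * (a - real j) * f j"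
  shows "f j = (- 4) ^ j * (a gchoose j)"
proof (induction j)
  case (Suc j)
  have absorb: "(a - real j) * (a gchoose j) = real (Suc j) * (a gchoose Suc j)"
    by (metis gbinomial_absorption gbinomial_absorb_comp)
  have "real (Suc j) * f (Suc j) = (- 4) ^ Suc j * ((a - real j) * (a gchoose j))"
    unfolding assms(2) Suc.IH by (simp add: algebra_simps)
  also have "\<dots> = real (Suc j) * ((- 4) ^ Suc j * (a gchoose Suc j))"
    unfolding absorb by (simp only: mult_ac)
  finally show ?case
    by (simp only: mult_cancel_left of_nat_eq_0_iff) simp
qed (simp add: assms(1))

lemma central_binomial_gbinomial: "central_binomial j = (- 4) ^ j * ((- 1 / 2) gchoose j)"
proof (rule gbinomial_by_recurrence)
  fix j
  show "real (Suc j) * central_binomial (Suc j) = - 4 * (- 1 / 2 - real j) * central_binomial j"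
    unfolding central_binomial_Suc by (simp add: algebra_simps)
qed (simp add: central_binomial_def)

lemma odd_central_binomial_gbinomial:
  "(2 * real j + 1) * central_binomial j = (- 4) ^ j * ((- 3 / 2) gchoose j)"
proof (rule gbinomial_by_recurrence[where f="\<lambda>j. (2 * real j + 1) * central_binomial j"])
  fix j
  have "real (Suc j) * ((2 * real (Suc j) + 1) * central_binomial (Suc j))
      = (2 * real (Suc j) + 1) * (real (Suc j) * central_binomial (Suc j))"
    by (simp only: mult_ac)
  then show "real (Suc j) * ((2 * real (Suc j) + 1) * central_binomial (Suc j))
      = - 4 * (- 3 / 2 - real j) * ((2 * real j + 1) * central_binomial j)"
    unfolding central_binomial_Suc by (simp add: algebra_simps)
qed (simp add: central_binomial_def)

lemma sum_convolution_power:
  fixes x y :: "nat \<Rightarrow> real"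
  shows "(\<Sum>j\<le>M. c ^ j * x j * (c ^ (M - j) * y (M - j))) = c ^ M * (\<Sum>j\<le>M. x j * y (M - j))"
  unfolding sum_distrib_left
  by (intro sum.cong refl) (simp add: power_add[symmetric] algebra_simps)

lemma sum_central_binomial_convolution:
  "(\<Sum>j\<le>M. central_binomial j * central_binomial (M - j)) = 4 ^ M"
proof -
  have "(\<Sum>j\<le>M. central_binomial j * central_binomial (M - j))
      = (- 4) ^ M * (((- 1 / 2) + (- 1 / 2)) gchoose M)"
    unfolding central_binomial_gbinomial sum_convolution_power
    using gbinomial_Vandermonde[of "- 1 / 2 :: real" "- 1 / 2" M] by (simp add: atLeast0AtMost)
  also have "((- 1 / 2 :: real) + (- 1 / 2)) gchoose M = (- 1) ^ M"
    using gbinomial_minus[of "1 :: real" M] by (simp add: binomial_gbinomial[symmetric])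
  finally show ?thesis
    by (simp flip: power_mult_distrib)
qed

lemma sum_odd_central_binomial_convolution:
  "(\<Sum>j\<le>M. (2 * real j + 1) * central_binomial j * ((2 * real (M - j) + 1) * central_binomial (M - j)))
     = 4 ^ M * (real M + 1) * (real M + 2) / 2"
proof -
  have "(\<Sum>j\<le>M. (2 * real j + 1) * central_binomial j * ((2 * real (M - j) + 1) * central_binomial (M - j)))
      = (- 4) ^ M * (((- 3 / 2) + (- 3 / 2)) gchoose M)"
    unfolding odd_central_binomial_gbinomial sum_convolution_power
    using gbinomial_Vandermonde[of "- 3 / 2 :: real" "- 3 / 2" M] by (simp add: atLeast0AtMost)
  also have "((- 3 / 2 :: real) + (- 3 / 2)) gchoose M = (- 1) ^ M * real ((M + 2) choose M)"
    using gbinomial_minus[of "3 :: real" M] by (simp add: binomial_gbinomial add.commute)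
  also have "real ((M + 2) choose M) = (real M + 1) * (real M + 2) / 2"
  proof -
    have "(M + 2) choose M = (M + 2) * (M + 1) div 2"
      using binomial_symmetric[of M "M + 2"] by (simp add: choose_two)
    then have "2 * ((M + 2) choose M) = (M + 2) * (M + 1)"
      by simp
    then have "real (2 * ((M + 2) choose M)) = real ((M + 2) * (M + 1))"
      by (simp only:)
    then show ?thesis
      by (simp add: field_simps)
  qed
  finally show ?thesis
    by (simp flip: power_mult_distrib)
qed

lemma sum_weighted_central_binomial_convolution:
  "8 * (\<Sum>j\<le>m. real j * real (m - j) * central_binomial j * central_binomial (m - j))
     = 4 ^ m * real m * (real m - 1)"
proof (cases "m < 2")
  case True
  then have "m = 0 \<or> m = 1"
    by auto
  then show ?thesis
    by auto
next
  case False
  then obtain M where m: "m = Suc (Suc M)"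
    by (metis add_2_eq_Suc le_Suc_ex not_less)
  let ?f = "\<lambda>j. real j * real (m - j) * central_binomial j * central_binomial (m - j)"
  have "(\<Sum>j\<le>m. ?f j) = (\<Sum>i\<le>M. ?f (Suc i))"
    unfolding m by (simp only: sum.atMost_Suc[of _ "Suc M"] sum.atMost_Suc_shift[of _ M]) simp
  also have "\<dots> = 4 * (\<Sum>i\<le>M. (2 * real i + 1) * central_binomial i
                                * ((2 * real (M - i) + 1) * central_binomial (M - i)))"
    unfolding sum_distrib_left
  proof (intro sum.cong refl)
    fix i assume "i \<in> {..M}"
    then have "m - Suc i = Suc (M - i)"
      by (simp add: m Suc_diff_le)
    then have "?f (Suc i) = (real (Suc i) * central_binomial (Suc i))
                            * (real (Suc (M - i)) * central_binomial (Suc (M - i)))"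
      by (simp only: mult_ac)
    then show "?f (Suc i) = 4 * ((2 * real i + 1) * central_binomial i
                                * ((2 * real (M - i) + 1) * central_binomial (M - i)))"
      unfolding central_binomial_Suc by (simp add: algebra_simps)
  qed
  finally show ?thesis
    unfolding sum_odd_central_binomial_convolution m by (simp add: field_simps)
qed

section \<open>Heights summed over all configurations\<close>

definition height_sum :: "nat list \<Rightarrow> real" where
  "height_sum w = (\<Sum>k\<le>length w. \<bar>real_of_int (balance (take k w))\<bar>)"

definition total_height_sum :: "nat \<Rightarrow> real" where
  "total_height_sum n = (\<Sum>u\<in>configs n. height_sum u)"

definition total_returns :: "nat \<Rightarrow> real" where
  "total_returns n = (\<Sum>u\<in>configs n. \<Sum>k\<le>n. if balance (take k u) = 0 then 1 else 0)"

lemma height_sum_configs: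
  "u \<in> configs n \<Longrightarrow> height_sum u = (\<Sum>k\<le>n. \<bar>real_of_int (balance (take k u))\<bar>)"
  by (simp add: height_sum_def configs_def)

lemma total_height_sum_walk_count:
  "real n * total_height_sum n
     = (\<Sum>k\<le>n. 4 * real k * real (n - k) * of_int (walk_count (k - 1) 0 * walk_count (n - k - 1) 0
                                                  + walk_count (k - 1) 1 * walk_count (n - k - 1) 1))"
proof -
  let ?K = "int n + 1"
  have "total_height_sum n = (\<Sum>k\<le>n. \<Sum>u\<in>configs n. \<bar>real_of_int (balance (take k u))\<bar>)"
    unfolding total_height_sum_def using height_sum_configs by (simp add: sum.swap[of _ "configs n"])
  also have "\<dots> = (\<Sum>k\<le>n. of_int (\<Sum>h=-?K..?K. \<bar>h\<bar> * (walk_count k h * walk_count (n - k) h)))"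
    by (intro sum.cong refl, subst sum_configs_prefix_balance[where K="?K"]) (auto simp: algebra_simps)
  finally have "real n * total_height_sum n
      = (\<Sum>k\<le>n. of_int (int n * (\<Sum>h=-?K..?K. \<bar>h\<bar> * (walk_count k h * walk_count (n - k) h))))"
    by (simp add: sum_distrib_left)
  also have "\<dots> = (\<Sum>k\<le>n. 4 * real k * real (n - k) * of_int (walk_count (k - 1) 0 * walk_count (n - k - 1) 0
                                                  + walk_count (k - 1) 1 * walk_count (n - k - 1) 1))"
    by (intro sum.cong refl, subst sum_abs_mult_walk_count) auto
  finally show ?thesis .
qed

lemma total_returns_walk_count:
  "total_returns n = (\<Sum>k\<le>n. of_int (walk_count k 0 * walk_count (n - k) 0))"
proof -
  let ?K = "int n + 1"
  have "total_returns n = (\<Sum>k\<le>n. \<Sum>u\<in>configs n. (\<lambda>h. if h = 0 then 1 else 0) (balance (take k u)))"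
    unfolding total_returns_def by (rule sum.swap)
  also have "\<dots> = (\<Sum>k\<le>n. of_int (walk_count k 0 * walk_count (n - k) 0))"
  proof (intro sum.cong refl)
    fix k assume "k \<in> {..n}"
    then show "(\<Sum>u\<in>configs n. (\<lambda>h. if h = 0 then 1 else 0) (balance (take k u)))
        = real_of_int (walk_count k 0 * walk_count (n - k) 0)"
      using sum_configs_prefix_balance[of k n ?K "\<lambda>h. if h = 0 then 1 else 0"]
      by (simp add: if_distrib[of "\<lambda>x. _ * x"] cong: if_cong)
  qed
  finally show ?thesis .
qed

lemma sum_atMost_even_odd:
  fixes g :: "nat \<Rightarrow> 'a::comm_monoid_add"
  shows "(\<Sum>k\<le>2 * m. g k) = (\<Sum>j\<le>m. g (2 * j)) + (\<Sum>j<m. g (2 * j + 1))"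
proof (induction m)
  case (Suc m)
  have "(\<Sum>k\<le>2 * Suc m. g k) = (\<Sum>k\<le>2 * m. g k) + g (2 * m + 1) + g (2 * m + 2)"
    by (simp add: numeral_2_eq_2)
  with Suc.IH show ?case
    by (simp add: add_ac)
qed simp

lemma total_returns_even: "total_returns (2 * m) = 4 ^ m"
proof -
  have "total_returns (2 * m) = (\<Sum>j\<le>m. of_int (walk_count (2 * j) 0 * walk_count (2 * m - 2 * j) 0))
      + (\<Sum>j<m. of_int (walk_count (2 * j + 1) 0 * walk_count (2 * m - (2 * j + 1)) 0))"
    unfolding total_returns_walk_count by (rule sum_atMost_even_odd)
  also have "(\<Sum>j<m. of_int (walk_count (2 * j + 1) 0 * walk_count (2 * m - (2 * j + 1)) 0) :: real) = 0"
    by (intro sum.neutral) (simp del: walk_count.simps add: walk_count_eq_0_if_odd)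
  also have "(\<Sum>j\<le>m. of_int (walk_count (2 * j) 0 * walk_count (2 * m - 2 * j) 0))
      = (\<Sum>j\<le>m. central_binomial j * central_binomial (m - j))"
    by (intro sum.cong refl) (simp del: walk_count.simps add: walk_count_even_0 flip: diff_mult_distrib2)
  finally show ?thesis
    by (simp add: sum_central_binomial_convolution)
qed

lemma walk_product_term_even:
  assumes "j \<le> m"
  shows "4 * real (2 * j) * real (2 * m - 2 * j)
           * of_int (walk_count (2 * j - 1) 0 * walk_count (2 * m - 2 * j - 1) 0
                     + walk_count (2 * j - 1) 1 * walk_count (2 * m - 2 * j - 1) 1)
       = 4 * (real j * real (m - j) * central_binomial j * central_binomial (m - j))"
proof (cases "j = 0 \<or> j = m")
  case False
  with assms obtain i l where il: "j = Suc i" "m - j = Suc l"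
    by (metis Suc_diff_Suc not0_implies_Suc le_neq_implies_less)
  then have "2 * j - 1 = Suc (2 * i)" "2 * m - 2 * j - 1 = Suc (2 * l)"
    by auto
  then have "real_of_int (walk_count (2 * j - 1) 0 * walk_count (2 * m - 2 * j - 1) 0
                          + walk_count (2 * j - 1) 1 * walk_count (2 * m - 2 * j - 1) 1)
      = central_binomial j * central_binomial (m - j) / 4"
    using il by (simp del: walk_count.simps add: walk_count_eq_0_if_odd walk_count_odd_1)
  moreover have "real (2 * m - 2 * j) = 2 * real (m - j)"
    by simp
  ultimately show ?thesis
    by simp
qed auto

lemma walk_product_term_odd:
  assumes "j < m"
  shows "4 * real (2 * j + 1) * real (2 * m - (2 * j + 1))
           * of_int (walk_count (2 * j + 1 - 1) 0 * walk_count (2 * m - (2 * j + 1) - 1) 0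
                     + walk_count (2 * j + 1 - 1) 1 * walk_count (2 * m - (2 * j + 1) - 1) 1)
       = 4 * ((2 * real j + 1) * central_binomial j
              * ((2 * real (m - 1 - j) + 1) * central_binomial (m - 1 - j)))"
proof -
  have "2 * j + 1 - 1 = 2 * j" "2 * m - (2 * j + 1) - 1 = 2 * (m - 1 - j)"
    and "real (2 * m - (2 * j + 1)) = 2 * real (m - 1 - j) + 1"
    using assms by auto
  then show ?thesis
    by (simp del: walk_count.simps add: walk_count_eq_0_if_odd walk_count_even_0)
qed

lemma total_height_sum_even: "2 * total_height_sum (2 * m) = real m * 4 ^ m"
proof (cases m)
  case (Suc M)
  have "real (2 * m) * total_height_sum (2 * m)
      = 4 * (\<Sum>j\<le>m. real j * real (m - j) * central_binomial j * central_binomial (m - j))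
        + 4 * (\<Sum>j<m. (2 * real j + 1) * central_binomial j
                       * ((2 * real (m - 1 - j) + 1) * central_binomial (m - 1 - j)))"
    unfolding total_height_sum_walk_count sum_atMost_even_odd sum_distrib_left
    by (intro arg_cong2[where f="(+)"] sum.cong refl walk_product_term_even walk_product_term_odd) auto
  also have "(\<Sum>j<m. (2 * real j + 1) * central_binomial j
                       * ((2 * real (m - 1 - j) + 1) * central_binomial (m - 1 - j)))
      = 4 ^ M * (real M + 1) * (real M + 2) / 2"
    unfolding Suc lessThan_Suc_atMost diff_Suc_1 by (rule sum_odd_central_binomial_convolution)
  finally have "real (2 * m) * total_height_sum (2 * m)
      = 4 ^ m * real m * (real m - 1) / 2 + 4 * (4 ^ M * (real M + 1) * (real M + 2) / 2)"
    using sum_weighted_central_binomial_convolution[of m] by simp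
  also have "\<dots> = real (2 * m) * (real m * 4 ^ m / 2)"
    unfolding Suc by (simp add: field_simps)
  finally show ?thesis
    unfolding Suc by simp
qed (auto simp: total_height_sum_def configs_eq_words height_sum_def intro!: sum.neutral)

section \<open>Flips as inserted pairs\<close>

definition insert_at :: "nat list \<Rightarrow> nat \<Rightarrow> nat list \<Rightarrow> nat list" where
  "insert_at u i p = take i u @ p @ drop i u"

definition flip_pairs :: "nat list set" where
  "flip_pairs = {[1, 2], [2, 1]}"

lemma occ_flip_pair: "p \<in> flip_pairs \<Longrightarrow> occ 1 p = 1 \<and> occ 2 p = 1"
  by (auto simp: flip_pairs_def occ_def)

definition flip_positions :: "nat list \<Rightarrow> nat set" where
  "flip_positions w = {i. i + 1 < length w \<and> w ! i \<noteq> w ! (i + 1)}"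

lemma flips_eq_card: "flips w = card (flip_positions w)"
  by (simp add: flips_def flip_positions_def)

lemma finite_flip_positions [simp]: "finite (flip_positions w)"
  by (rule finite_subset[of _ "{..<length w}"]) (auto simp: flip_positions_def)

lemma insert_at_configs:
  assumes "u \<in> configs n" "i \<le> n" "p \<in> flip_pairs"
  shows "insert_at u i p \<in> configs (n + 2)"
proof -
  have "occ a u = occ a (take i u) + occ a (drop i u)" for a
    by (metis append_take_drop_id occ_append)
  with assms occ_flip_pair[OF assms(3)] show ?thesis
    by (auto simp: configs_def insert_at_def occ_append flip_pairs_def dest: in_set_takeD in_set_dropD)
qed

lemma take_nth_nth_drop:
  "i + 1 < length w \<Longrightarrow> take i w @ [w ! i, w ! (i + 1)] @ drop (i + 2) w = w"
  by (metis Cons_nth_drop_Suc Suc_eq_plus1 Suc_lessD add_2_eq_Suc' append_Cons append_Nil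
      id_take_nth_drop)

lemma insert_at_take_drop:
  assumes "i + 1 < length w"
  shows "insert_at (take i w @ drop (i + 2) w) i [w ! i, w ! (i + 1)] = w"
  using assms take_nth_nth_drop[OF assms] by (simp add: insert_at_def)

lemma remove_flip_pair:
  assumes "w \<in> configs (n + 2)" "i \<in> flip_positions w"
  shows "take i w @ drop (i + 2) w \<in> configs n" "[w ! i, w ! (i + 1)] \<in> flip_pairs"
proof -
  have w: "set w \<subseteq> {1, 2}" "length w = n + 2" "i + 1 < length w" "w ! i \<noteq> w ! (i + 1)"
    using assms by (simp_all add: configs_def flip_positions_def)
  then have "w ! i \<in> set w" "w ! (i + 1) \<in> set w"
    by simp_all
  with w(1) have "w ! i \<in> {1, 2}" "w ! (i + 1) \<in> {1, 2}"
    by auto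
  with w show pair: "[w ! i, w ! (i + 1)] \<in> flip_pairs"
    by (auto simp: flip_pairs_def)
  from take_nth_nth_drop[OF w(3)]
  have "occ a w = occ a (take i w) + occ a [w ! i, w ! (i + 1)] + occ a (drop (i + 2) w)" for a
    by (metis occ_append add.assoc)
  with assms w occ_flip_pair[OF pair] show "take i w @ drop (i + 2) w \<in> configs n"
    by (auto simp: configs_def occ_append dest: in_set_takeD in_set_dropD)
qed

lemma bij_betw_insert_at:
  "bij_betw (\<lambda>(u, i, p). (insert_at u i p, i))
     (configs n \<times> {..n} \<times> flip_pairs) (Sigma (configs (n + 2)) flip_positions)"
proof (rule bij_betw_byWitness[where f'="\<lambda>(w, i). (take i w @ drop (i + 2) w, i, [w ! i, w ! (i + 1)])"],
       goal_cases)
  case 1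
  have "length u = n" if "u \<in> configs n" for u
    using that by (simp add: configs_def)
  then show ?case
    by (auto simp: insert_at_def nth_append flip_pairs_def)
next
  case 2
  show ?case
    using insert_at_take_drop by (auto simp: flip_positions_def)
next
  case 3
  have "(insert_at u i p, i) \<in> Sigma (configs (n + 2)) flip_positions"
    if "u \<in> configs n" "i \<le> n" "p \<in> flip_pairs" for u i p
  proof (rule SigmaI)
    show "insert_at u i p \<in> configs (n + 2)"
      using that by (rule insert_at_configs)
    have "length u = n"
      using that(1) by (simp add: configs_def)
    with that show "i \<in> flip_positions (insert_at u i p)"
      by (auto simp: insert_at_def nth_append flip_pairs_def flip_positions_def)
  qed
  then show ?case
    by auto
next
  case 4
  have "(take i w @ drop (i + 2) w, i, [w ! i, w ! (i + 1)]) \<in> configs n \<times> {..n} \<times> flip_pairs"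
    if "w \<in> configs (n + 2)" "i \<in> flip_positions w" for w i
    using remove_flip_pair[OF that] that by (auto simp: configs_def flip_positions_def)
  then show ?case
    by auto
qed

lemma sum_flips_mult:
  "(\<Sum>w\<in>configs (n + 2). real (flips w) * g w)
     = (\<Sum>u\<in>configs n. \<Sum>i\<le>n. \<Sum>p\<in>flip_pairs. g (insert_at u i p))"
proof -
  have "(\<Sum>w\<in>configs (n + 2). real (flips w) * g w) = (\<Sum>w\<in>configs (n + 2). \<Sum>i\<in>flip_positions w. g w)"
    by (simp add: flips_eq_card)
  also have "\<dots> = (\<Sum>(w, i)\<in>Sigma (configs (n + 2)) flip_positions. g w)"
    by (rule sum.Sigma) simp_all
  also have "\<dots> = (\<Sum>(u, i, p)\<in>configs n \<times> {..n} \<times> flip_pairs. g (insert_at u i p))"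
    by (subst sum.reindex_bij_betw[OF bij_betw_insert_at, symmetric]) (simp add: case_prod_beta)
  finally show ?thesis
    by (simp add: sum.cartesian_product)
qed

lemma balance_take_insert_at:
  assumes "length u = n" "i \<le> n" "p \<in> flip_pairs"
  shows "balance (take k (insert_at u i p))
       = (if k \<le> i then balance (take k u)
          else if k = i + 1 then balance (take i u) + balance [hd p]
          else balance (take (k - 2) u))"
proof -
  have p: "p = [hd p, p ! 1]" "balance p = 0"
    using assms(3) by (auto simp: flip_pairs_def balance_def occ_def)
  consider "k \<le> i" | "k = i + 1" | "i + 2 \<le> k"
    by linarith
  then show ?thesis
  proof cases
    case 2
    then have "take k (insert_at u i p) = take i u @ [hd p]"
      using assms by (subst p(1)) (simp add: insert_at_def)
    with 2 show ?thesis
      by simp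
  next
    case 3
    have "length (take i u) = i" "length p = 2"
      using assms by (auto simp: flip_pairs_def)
    with 3 have "take k (insert_at u i p) = take i u @ p @ take (k - i - 2) (drop i u)"
      by (simp add: insert_at_def)
    moreover have "take (k - 2) u = take i u @ take (k - i - 2) (drop i u)"
      using 3 take_add[of i "k - i - 2" u] by simp
    ultimately show ?thesis
      using 3 p(2) by simp
  qed (use assms in \<open>simp add: insert_at_def\<close>)
qed

lemma sum_atMost_insert_two:
  fixes F G :: "nat \<Rightarrow> 'a::comm_monoid_add"
  assumes "i \<le> n" "\<And>k. k \<le> i \<Longrightarrow> F k = G k" "\<And>k. i + 2 \<le> k \<Longrightarrow> F k = G (k - 2)"
  shows "(\<Sum>k\<le>n + 2. F k) = (\<Sum>k\<le>n. G k) + G i + F (i + 1)"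
  using assms(1)
proof (induction n rule: dec_induct)
  case base
  have "(\<Sum>k\<le>i + 2. F k) = (\<Sum>k\<le>i. F k) + F (i + 1) + F (i + 2)"
    by (simp add: add.assoc)
  also have "(\<Sum>k\<le>i. F k) = (\<Sum>k\<le>i. G k)"
    using assms(2) by simp
  finally show ?case
    using assms(3)[of "i + 2"] by (simp add: add_ac)
next
  case (step n)
  with assms(3)[of "Suc n + 2"] show ?case
    by (simp add: add_ac)
qed

lemma height_sum_insert_at:
  assumes "u \<in> configs n" "i \<le> n" "p \<in> flip_pairs"
  shows "height_sum (insert_at u i p)
       = height_sum u + \<bar>real_of_int (balance (take i u))\<bar>
         + \<bar>real_of_int (balance (take i u)) + real_of_int (balance [hd p])\<bar>"
proof -
  have lengths: "length u = n" "length (insert_at u i p) = n + 2"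
    using assms insert_at_configs[OF assms] by (simp_all add: configs_def)
  with assms show ?thesis
    unfolding height_sum_def lengths
    by (subst sum_atMost_insert_two[where i=i and G="\<lambda>k. \<bar>real_of_int (balance (take k u))\<bar>"])
       (use lengths in \<open>auto simp: balance_take_insert_at\<close>)
qed

lemma abs_add_one_add_abs_diff_one:
  "\<bar>real_of_int h + 1\<bar> + \<bar>real_of_int h - 1\<bar> = 2 * \<bar>real_of_int h\<bar> + (if h = 0 then 2 else 0)"
proof -
  consider "h = 0" | "h \<ge> 1" | "h \<le> - 1"
    by linarith
  then show ?thesis
    by cases auto
qed

lemma sum_flips_height_sum:
  "(\<Sum>w\<in>configs (n + 2). real (flips w) * height_sum w)
     = (2 * real n + 6) * total_height_sum n + 2 * total_returns n"
proof -
  have "(\<Sum>p\<in>flip_pairs. height_sum (insert_at u i p))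
      = 2 * height_sum u + 4 * \<bar>real_of_int (balance (take i u))\<bar>
        + 2 * (if balance (take i u) = 0 then 1 else 0)"
    if "u \<in> configs n" "i \<le> n" for u i
  proof -
    have "(\<Sum>p\<in>flip_pairs. height_sum (insert_at u i p))
        = 2 * height_sum u + 2 * \<bar>real_of_int (balance (take i u))\<bar>
          + (\<bar>real_of_int (balance (take i u)) + 1\<bar> + \<bar>real_of_int (balance (take i u)) - 1\<bar>)"
      using that by (simp add: height_sum_insert_at flip_pairs_def)
    then show ?thesis
      unfolding abs_add_one_add_abs_diff_one by simp
  qed
  then have "(\<Sum>w\<in>configs (n + 2). real (flips w) * height_sum w)
      = (\<Sum>u\<in>configs n. \<Sum>i\<le>n. 2 * height_sum u + 4 * \<bar>real_of_int (balance (take i u))\<bar>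
                                 + 2 * (if balance (take i u) = 0 then 1 else 0))"
    unfolding sum_flips_mult by (intro sum.cong refl) auto
  also have "\<dots> = (\<Sum>u\<in>configs n. (2 * real n + 6) * height_sum u
                    + 2 * (\<Sum>i\<le>n. if balance (take i u) = 0 then 1 else 0))"
    by (intro sum.cong refl)
       (simp add: height_sum_configs sum.distrib sum_distrib_left[symmetric] algebra_simps)
  also have "\<dots> = (2 * real n + 6) * total_height_sum n + 2 * total_returns n"
    by (simp add: sum.distrib sum_distrib_left total_height_sum_def total_returns_def)
  finally show ?thesis .
qed

lemma card_configs: "real (card (configs n)) = of_int (walk_count n 0)"
proof -
  have "real (card (configs n)) = (\<Sum>u\<in>configs n. (\<lambda>_. 1 :: real) (balance (take 0 u)))"
    by simp
  also have "\<dots> = (\<Sum>h=-(int n + 1)..int n + 1. of_int (walk_count 0 h * walk_count n h))"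
    by (subst sum_configs_prefix_balance[where K="int n + 1"]) auto
  also have "\<dots> = (\<Sum>h=-(int n + 1)..int n + 1. if h = 0 then of_int (walk_count n 0) else 0)"
    by (rule sum.cong) auto
  finally show ?thesis
    by simp
qed

lemma sum_flips:
  "(\<Sum>w\<in>configs (n + 2). real (flips w)) = 2 * (real n + 1) * of_int (walk_count n 0)"
  using sum_flips_mult[where n=n and g="\<lambda>_. 1"]
  by (simp add: card_configs flip_pairs_def)

section \<open>The volume of a configuration\<close>

lemma has_integral_affine_unit:
  fixes a b c :: real
  shows "((\<lambda>x. a + (x - c) * (b - a)) has_integral (a + b) / 2) {c..c + 1}"
proof -
  define \<Phi> where "\<Phi> x = a * x + (x - c)\<^sup>2 * (b - a) / 2" for x :: real
  have "((\<lambda>x. a + (x - c) * (b - a)) has_integral (\<Phi> (c + 1) - \<Phi> c)) {c..c + 1}"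
  proof (rule fundamental_theorem_of_calculus)
    fix x :: real
    have "(\<Phi> has_real_derivative (a + (x - c) * (b - a))) (at x within {c..c + 1})"
      unfolding \<Phi>_def by (auto intro!: derivative_eq_intros simp: field_simps)
    then show "(\<Phi> has_vector_derivative (a + (x - c) * (b - a))) (at x within {c..c + 1})"
      by (simp add: has_real_derivative_iff_has_vector_derivative)
  qed simp
  moreover have "\<Phi> (c + 1) - \<Phi> c = (a + b) / 2"
    unfolding \<Phi>_def by (simp add: field_simps)
  ultimately show ?thesis
    by simp
qed

lemma has_integral_abs_affine_unit:
  fixes a b c :: real
  assumes "0 \<le> a * b"
  shows "((\<lambda>x. \<bar>a + (x - c) * (b - a)\<bar>) has_integral (\<bar>a\<bar> + \<bar>b\<bar>) / 2) {c..c + 1}"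
proof -
  define \<sigma> where "\<sigma> = (if a + b < 0 then - 1 else 1 :: real)"
  have same_sign: "0 \<le> a \<and> 0 \<le> b \<or> a \<le> 0 \<and> b \<le> 0"
    using assms by (auto simp: zero_le_mult_iff)
  have pointwise: "\<sigma> * (a + (x - c) * (b - a)) = \<bar>a + (x - c) * (b - a)\<bar>" if "x \<in> {c..c + 1}" for x
  proof -
    have convex: "a + (x - c) * (b - a) = (1 - (x - c)) * a + (x - c) * b"
      by (simp add: algebra_simps)
    have "0 \<le> 1 - (x - c)" "0 \<le> x - c"
      using that by auto
    with same_sign show ?thesis
    proof (elim disjE conjE)
      assume "0 \<le> a" "0 \<le> b"
      with \<open>0 \<le> 1 - (x - c)\<close> \<open>0 \<le> x - c\<close> show ?thesis
        unfolding convex \<sigma>_def by auto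
    next
      assume "a \<le> 0" "b \<le> 0"
      with \<open>0 \<le> 1 - (x - c)\<close> \<open>0 \<le> x - c\<close> have "(1 - (x - c)) * a + (x - c) * b \<le> 0"
        by (simp add: add_nonpos_nonpos mult_nonneg_nonpos)
      moreover have "a + b < 0 \<or> a = 0 \<and> b = 0"
        using \<open>a \<le> 0\<close> \<open>b \<le> 0\<close> by linarith
      ultimately show ?thesis
        unfolding convex \<sigma>_def by auto
    qed
  qed
  have "\<sigma> * ((a + b) / 2) = (\<bar>a\<bar> + \<bar>b\<bar>) / 2"
    using same_sign by (auto simp: \<sigma>_def)
  then have "((\<lambda>x. \<sigma> * (a + (x - c) * (b - a))) has_integral (\<bar>a\<bar> + \<bar>b\<bar>) / 2) {c..c + 1}"
    using has_integral_mult_right[OF has_integral_affine_unit[of a c b], of \<sigma>] by simp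
  then show ?thesis
    by (rule has_integral_eq[rotated]) (rule pointwise)
qed

lemma broken_line_on_segment:
  assumes "x \<in> {real k..real k + 1}"
  shows "broken_line w x = height w k + (x - real k) * (height w (Suc k) - height w k)"
proof (cases "x = real k + 1")
  case True
  then have "nat \<lfloor>x\<rfloor> = Suc k"
    by simp
  with True show ?thesis
    by (simp add: broken_line_def)
next
  case False
  with assms have "\<lfloor>x\<rfloor> = int k"
    by (simp add: floor_eq_iff)
  then show ?thesis
    by (simp add: broken_line_def)
qed

text \<open>Consecutive heights differ by at most one, so the broken line does not cross the axis inside
  a unit segment and its absolute value is again affine there.\<close>
lemma height_mult_height_Suc_nonneg: "0 \<le> height w k * height w (Suc k)"
proof -
  have "0 \<le> balance (take k w) * balance (take (Suc k) w)"
    using abs_balance_take_Suc_diff[of k w] by (auto simp: abs_le_iff zero_le_mult_iff)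
  then show ?thesis
    unfolding height_eq_balance by (metis of_int_0_le_iff of_int_mult)
qed

lemma has_integral_abs_broken_line:
  "((\<lambda>x. \<bar>broken_line w x\<bar>) has_integral (\<Sum>k<n. (\<bar>height w k\<bar> + \<bar>height w (Suc k)\<bar>) / 2)) {0..real n}"
proof (induction n)
  case 0
  show ?case
    using has_integral_refl(2)[of "\<lambda>x. \<bar>broken_line w x\<bar>" "0 :: real"] by simp
next
  case (Suc n)
  have "((\<lambda>x. \<bar>broken_line w x\<bar>) has_integral (\<bar>height w n\<bar> + \<bar>height w (Suc n)\<bar>) / 2) {real n..real n + 1}"
    using has_integral_abs_affine_unit[OF height_mult_height_Suc_nonneg, of w n "real n"]
    by (rule has_integral_eq[rotated]) (simp add: broken_line_on_segment)
  then have "((\<lambda>x. \<bar>broken_line w x\<bar>) has_integral (\<bar>height w n\<bar> + \<bar>height w (Suc n)\<bar>) / 2)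
      {real n..real (Suc n)}"
    by (simp add: add.commute)
  from has_integral_combine[OF _ _ Suc.IH this] show ?case
    by simp
qed

lemma volume_configs: "w \<in> configs n \<Longrightarrow> volume w = height_sum w"
proof -
  assume w: "w \<in> configs n"
  then have "length w = n" "height w n = 0"
    by (simp_all add: configs_def height_def)
  have "volume w = (\<Sum>k<n. (\<bar>height w k\<bar> + \<bar>height w (Suc k)\<bar>) / 2)"
    unfolding volume_def \<open>length w = n\<close> using has_integral_abs_broken_line by (rule integral_unique)
  also have "\<dots> = ((\<Sum>k<n. \<bar>height w k\<bar>) + (\<Sum>k<n. \<bar>height w (Suc k)\<bar>)) / 2"
    by (simp add: sum.distrib sum_divide_distrib[symmetric])
  also have "(\<Sum>k<n. \<bar>height w k\<bar>) = (\<Sum>k\<le>n. \<bar>height w k\<bar>)"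
    using \<open>height w n = 0\<close> by (simp add: lessThan_Suc_atMost[symmetric])
  also have "(\<Sum>k<n. \<bar>height w (Suc k)\<bar>) = (\<Sum>k\<le>n. \<bar>height w k\<bar>)"
    unfolding lessThan_Suc_atMost[symmetric] sum.lessThan_Suc_shift by (simp add: height_def occ_def)
  finally show ?thesis
    using w by (simp add: height_sum_configs height_eq_balance)
qed

section \<open>Asymptotics of the mean volume\<close>

lemma mean_volume_double_Suc:
  "mean_volume (2 * Suc m)
     = 4 ^ m * (2 * real m ^ 2 + 3 * real m + 2) / (2 * (2 * real m + 1) * central_binomial m)"
proof -
  have "mean_volume (2 * m + 2)
      = (\<Sum>w\<in>configs (2 * m + 2). real (flips w) * height_sum w) / (\<Sum>w\<in>configs (2 * m + 2). real (flips w))"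
    unfolding mean_volume_def nu_def sum_divide_distrib
    by (intro sum.cong refl) (simp add: volume_configs)
  also have "\<dots> = ((4 * real m + 6) * total_height_sum (2 * m) + 2 * total_returns (2 * m))
                  / (2 * (2 * real m + 1) * central_binomial m)"
    unfolding sum_flips_height_sum sum_flips walk_count_even_0 by simp
  also have "\<dots> = 4 ^ m * (2 * real m ^ 2 + 3 * real m + 2) / (2 * (2 * real m + 1) * central_binomial m)"
  proof -
    have "total_height_sum (2 * m) = real m * 4 ^ m / 2"
      using total_height_sum_even[of m] by linarith
    then show ?thesis
      unfolding total_returns_even by (simp only: divide_cancel_right) (simp add: algebra_simps power2_eq_square)
  qed
  finally show ?thesis
    by simp
qed

lemma wallis_central_binomial:
  "(\<Prod>k=1..m. 4 * real k ^ 2 / (4 * real k ^ 2 - 1)) = 16 ^ m / ((2 * real m + 1) * central_binomial m ^ 2)"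
proof (induction m)
  case (Suc m)
  define c where "c = central_binomial m"
  have pos: "0 < c" "0 < 2 * real m + 1" "0 < real m + 1" "0 < 2 * real m + 3"
    using central_binomial_pos[of m] by (simp_all add: c_def)
  have "4 * (real m + 1) ^ 2 - 1 = (2 * real m + 1) * (2 * real m + 3)"
    by (simp add: algebra_simps power2_eq_square)
  moreover have "(\<Prod>k=1..Suc m. 4 * real k ^ 2 / (4 * real k ^ 2 - 1))
      = (\<Prod>k=1..m. 4 * real k ^ 2 / (4 * real k ^ 2 - 1)) * (4 * (real m + 1) ^ 2 / (4 * (real m + 1) ^ 2 - 1))"
    by (simp add: prod.cl_ivl_Suc add.commute)
  ultimately have "(\<Prod>k=1..Suc m. 4 * real k ^ 2 / (4 * real k ^ 2 - 1))
      = 16 ^ m / ((2 * real m + 1) * c ^ 2) * (4 * (real m + 1) ^ 2 / ((2 * real m + 1) * (2 * real m + 3)))"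
    unfolding Suc.IH c_def by simp
  also have "\<dots> = 16 ^ Suc m / ((2 * real (Suc m) + 1) * (2 * (2 * real m + 1) * c / (real m + 1)) ^ 2)"
  proof -
    have "A / (u * c ^ 2) * (4 * y ^ 2 / (u * v)) = 16 * A / (v * (2 * u * c / y) ^ 2)"
      if "c \<noteq> 0" "u \<noteq> 0" "v \<noteq> 0" "y \<noteq> 0" for A c u v y :: real
      using that by (simp add: field_simps power2_eq_square)
    from this[of c "2 * real m + 1" "2 * real m + 3" "real m + 1" "16 ^ m"] pos show ?thesis
      by (simp add: algebra_simps)
  qed
  also have "2 * (2 * real m + 1) * c / (real m + 1) = central_binomial (Suc m)"
    using central_binomial_Suc[of m] pos by (simp add: c_def field_simps)
  finally show ?case .
qed (simp add: central_binomial_def)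

lemma central_binomial_asymp_equiv: "central_binomial \<sim>[at_top] (\<lambda>m. 4 ^ m / sqrt (pi * real m))"
proof (rule asymp_equivI')
  let ?r = "\<lambda>m. central_binomial m / (4 ^ m / sqrt (pi * real m))"
  let ?W = "\<lambda>m. 16 ^ m / ((2 * real m + 1) * central_binomial m ^ 2)"
  have r_sq: "?r m ^ 2 = pi * (real m / (2 * real m + 1)) / ?W m" for m
  proof -
    have "(4 ^ m) ^ 2 = (16 :: real) ^ m"
      by (simp add: power2_eq_square flip: power_mult_distrib)
    then have "?r m ^ 2 = pi * real m * central_binomial m ^ 2 / 16 ^ m"
      by (simp add: power_divide power_mult_distrib)
    moreover have "2 * real m + 1 \<noteq> 0"
      by simp
    ultimately show ?thesis
      by (simp add: divide_simps)
  qed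
  have half: "(\<lambda>m. real m / (2 * real m + 1)) \<longlonglongrightarrow> 1 / 2"
    by real_asymp
  have "?W \<longlonglongrightarrow> pi / 2"
    using wallis unfolding wallis_central_binomial .
  from tendsto_divide[OF tendsto_mult[OF tendsto_const[of pi] half] this]
  have "(\<lambda>m. pi * (real m / (2 * real m + 1)) / ?W m) \<longlonglongrightarrow> pi * (1 / 2) / (pi / 2)"
    by simp
  then have "(\<lambda>m. sqrt (?r m ^ 2)) \<longlonglongrightarrow> sqrt 1"
    unfolding r_sq by (intro tendsto_real_sqrt) simp
  moreover have "sqrt (?r m ^ 2) = ?r m" for m
    using central_binomial_pos[of m] by simp
  ultimately show "(\<lambda>m. central_binomial m / (4 ^ m / sqrt (pi * real m))) \<longlonglongrightarrow> 1"
    by simp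
qed

lemma asymp_equiv_sequentially_Suc_iff:
  fixes f g :: "nat \<Rightarrow> 'a::real_normed_field"
  shows "(\<lambda>n. f (Suc n)) \<sim>[at_top] (\<lambda>n. g (Suc n)) \<longleftrightarrow> f \<sim>[at_top] g"
  using filterlim_sequentially_Suc[of "\<lambda>n. if f n = 0 \<and> g n = 0 then 1 else f n / g n"]
  by (simp add: asymp_equiv_def)

lemma sqrt_two_pi_scaling:
  fixes x :: real
  shows "sqrt (2 * pi) / 8 * (2 * x) * sqrt (2 * x) = sqrt pi * (x * sqrt x / 2)"
proof -
  have "sqrt 2 * (sqrt 2 * y) = 2 * y" for y :: real
    by (simp flip: mult.assoc)
  then show ?thesis
    by (simp add: real_sqrt_mult algebra_simps)
qed

theorem proposition2:
  shows "(\<lambda>m. mean_volume (2 * m)) \<sim>[at_top]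
         (\<lambda>m. sqrt (2 * pi) / 8 * real (2 * m) * sqrt (real (2 * m)))"
proof -
  define A where "A m = 4 ^ m * (2 * real m ^ 2 + 3 * real m + 2) / (2 * (2 * real m + 1))" for m
  define P where "P m = (2 * real m ^ 2 + 3 * real m + 2) * sqrt (real m) / (2 * (2 * real m + 1))" for m
  have mean: "(\<lambda>m. mean_volume (2 * Suc m)) = (\<lambda>m. A m / central_binomial m)"
    unfolding mean_volume_double_Suc A_def by simp
  have cancel: "(\<lambda>m. A m / (4 ^ m / sqrt (pi * real m))) = (\<lambda>m. sqrt pi * P m)"
    unfolding A_def P_def by (simp add: real_sqrt_mult mult_ac)
  have target: "sqrt (2 * pi) / 8 * real (2 * Suc m) * sqrt (real (2 * Suc m))
      = sqrt pi * ((real m + 1) * sqrt (real m + 1) / 2)" for m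
    using sqrt_two_pi_scaling[of "real m + 1"] by (simp add: algebra_simps)
  have "(\<lambda>m. A m / central_binomial m) \<sim>[at_top] (\<lambda>m. A m / (4 ^ m / sqrt (pi * real m)))"
    by (rule asymp_equiv_divide[OF asymp_equiv_refl central_binomial_asymp_equiv])
  moreover have "(\<lambda>m. sqrt pi * P m) \<sim>[at_top] (\<lambda>m. sqrt pi * ((real m + 1) * sqrt (real m + 1) / 2))"
    unfolding P_def by (intro asymp_equiv_mult asymp_equiv_refl) real_asymp
  ultimately have "(\<lambda>m. mean_volume (2 * Suc m))
      \<sim>[at_top] (\<lambda>m. sqrt (2 * pi) / 8 * real (2 * Suc m) * sqrt (real (2 * Suc m)))"
    unfolding mean cancel target by (rule asymp_equiv_trans)
  then show ?thesis
    by (rule asymp_equiv_sequentially_Suc_iff[THEN iffD1])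
qed

end
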